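(* For every instance of problem MR, the makespan $\max_{j\in\mathcal J}C_j$ of any optimal schedule is at most $$t_{\max}=\frac{w_{\max}}{w_{\min}}\left(n\,r_{\max}+n(n+1)\left(\frac{|\mathcal T|\cdot v_{\max}^{\beta}}{E}\right)^{\frac{1}{\beta-1}}\right).$$
   Context: Problem MR. There are jobs $\mathcal J=\{1,\dots,n\}$ and processors $\mathcal P=\{1,\dots,m\}$. Job $j$ has weight $w_j>0$, release date $r_j\ge0$, and a nonempty set of Map tasks and a nonempty set of Reduce tasks, preassigned to processors with at most one task of each job per processor; $T_{i,j}$ is the task of job $j$ on processor $i$, with work $v_{i,j}\ge0$; $\mathcal T$ is the set of all tasks and $|\mathcal T|$ its cardinality. A schedule gives each task a start time and a constant speed $s_{i,j}>0$; the task runs non-preemptively for $v_{i,j}/s_{i,j}$ time units and uses energy $v_{i,j}s_{i,j}^{\beta-1}$, where $\beta>1$ is a fixed constant. Feasibility: each processor runs at most one task at a time; tasks of job $j$ start no earlier than $r_j$; Reduce tasks of job $j$ start only after all Map tasks of job $j$ complete; total energy at most a given budget $E>0$. $C_j$ is the maximum completion time of the tasks of job $j$; the objective is to minimize $\sum_j w_jC_j$. $w_{\min}=\min_j w_j$, $w_{\max}=\max_j w_j$, $r_{\max}=\max_j r_j$, $v_{\max}=\max_{i,j}v_{i,j}$. *)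

theory Defs
  imports Complex_Main
begin

text \<open>Jobs are 1..n, processors are 1..m. The task of job j on processor i
  (if any) has kind \<open>kind i j\<close> (Map or Reduce); \<open>kind i j = None\<close> means there is no task.
  Work of task T_ij is \<open>v i j\<close>. A schedule is a pair of functions: start times \<open>S i j\<close> and
  speeds \<open>s i j\<close> (only their values on tasks matter).\<close>

datatype phase = MapTask | ReduceTask

definition tasks :: "nat \<Rightarrow> nat \<Rightarrow> (nat \<Rightarrow> nat \<Rightarrow> phase option) \<Rightarrow> (nat \<times> nat) set" where
  "tasks n m kind = {(i, j). i \<in> {1..m} \<and> j \<in> {1..n} \<and> kind i j \<noteq> None}"

definition valid_instance ::
  "nat \<Rightarrow> nat \<Rightarrow> (nat \<Rightarrow> nat \<Rightarrow> phase option) \<Rightarrow> (nat \<Rightarrow> real) \<Rightarrow> (nat \<Rightarrow> real)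
   \<Rightarrow> (nat \<Rightarrow> nat \<Rightarrow> real) \<Rightarrow> real \<Rightarrow> real \<Rightarrow> bool" where
  "valid_instance n m kind w r v \<beta> E \<longleftrightarrow>
     n \<ge> 1 \<and> \<beta> > 1 \<and> E > 0 \<and>
     (\<forall>j\<in>{1..n}. w j > 0 \<and> r j \<ge> 0 \<and>
        (\<exists>i\<in>{1..m}. kind i j = Some MapTask) \<and>
        (\<exists>i\<in>{1..m}. kind i j = Some ReduceTask)) \<and>
     (\<forall>(i, j)\<in>tasks n m kind. v i j \<ge> 0)"

definition compl :: "(nat \<Rightarrow> nat \<Rightarrow> real) \<Rightarrow> (nat \<Rightarrow> nat \<Rightarrow> real) \<Rightarrow> (nat \<Rightarrow> nat \<Rightarrow> real)
   \<Rightarrow> nat \<Rightarrow> nat \<Rightarrow> real" where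
  "compl v S s i j = S i j + v i j / s i j"

definition job_completion ::
  "nat \<Rightarrow> (nat \<Rightarrow> nat \<Rightarrow> phase option) \<Rightarrow> (nat \<Rightarrow> nat \<Rightarrow> real)
   \<Rightarrow> (nat \<Rightarrow> nat \<Rightarrow> real) \<Rightarrow> (nat \<Rightarrow> nat \<Rightarrow> real) \<Rightarrow> nat \<Rightarrow> real" where
  "job_completion m kind v S s j =
     Max {compl v S s i j | i. i \<in> {1..m} \<and> kind i j \<noteq> None}"

definition energy ::
  "nat \<Rightarrow> nat \<Rightarrow> (nat \<Rightarrow> nat \<Rightarrow> phase option) \<Rightarrow> (nat \<Rightarrow> nat \<Rightarrow> real) \<Rightarrow> real
   \<Rightarrow> (nat \<Rightarrow> nat \<Rightarrow> real) \<Rightarrow> real" where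
  "energy n m kind v \<beta> s = (\<Sum>(i, j)\<in>tasks n m kind. v i j * s i j powr (\<beta> - 1))"

definition feasible ::
  "nat \<Rightarrow> nat \<Rightarrow> (nat \<Rightarrow> nat \<Rightarrow> phase option) \<Rightarrow> (nat \<Rightarrow> real)
   \<Rightarrow> (nat \<Rightarrow> nat \<Rightarrow> real) \<Rightarrow> real \<Rightarrow> real
   \<Rightarrow> (nat \<Rightarrow> nat \<Rightarrow> real) \<Rightarrow> (nat \<Rightarrow> nat \<Rightarrow> real) \<Rightarrow> bool" where
  "feasible n m kind r v \<beta> E S s \<longleftrightarrow>
     (\<forall>(i, j)\<in>tasks n m kind. s i j > 0 \<and> S i j \<ge> r j) \<and>
     (\<forall>i j j'. (i, j) \<in> tasks n m kind \<and> (i, j') \<in> tasks n m kind \<and> j \<noteq> j' \<longrightarrow>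
        compl v S s i j \<le> S i j' \<or> compl v S s i j' \<le> S i j) \<and>
     (\<forall>j\<in>{1..n}. \<forall>i\<in>{1..m}. \<forall>i'\<in>{1..m}.
        kind i j = Some MapTask \<and> kind i' j = Some ReduceTask \<longrightarrow> compl v S s i j \<le> S i' j) \<and>
     energy n m kind v \<beta> s \<le> E"

definition objective ::
  "nat \<Rightarrow> nat \<Rightarrow> (nat \<Rightarrow> nat \<Rightarrow> phase option) \<Rightarrow> (nat \<Rightarrow> real) \<Rightarrow> (nat \<Rightarrow> nat \<Rightarrow> real)
   \<Rightarrow> (nat \<Rightarrow> nat \<Rightarrow> real) \<Rightarrow> (nat \<Rightarrow> nat \<Rightarrow> real) \<Rightarrow> real" where
  "objective n m kind w v S s = (\<Sum>j\<in>{1..n}. w j * job_completion m kind v S s j)"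

definition optimal ::
  "nat \<Rightarrow> nat \<Rightarrow> (nat \<Rightarrow> nat \<Rightarrow> phase option) \<Rightarrow> (nat \<Rightarrow> real) \<Rightarrow> (nat \<Rightarrow> real)
   \<Rightarrow> (nat \<Rightarrow> nat \<Rightarrow> real) \<Rightarrow> real \<Rightarrow> real
   \<Rightarrow> (nat \<Rightarrow> nat \<Rightarrow> real) \<Rightarrow> (nat \<Rightarrow> nat \<Rightarrow> real) \<Rightarrow> bool" where
  "optimal n m kind w r v \<beta> E S s \<longleftrightarrow>
     feasible n m kind r v \<beta> E S s \<and>
     (\<forall>S' s'. feasible n m kind r v \<beta> E S' s' \<longrightarrow>
        objective n m kind w v S s \<le> objective n m kind w v S' s')"

end

theory Submission
  imports Defs
begin

text \<open>It suffices to exhibit one feasible schedule of small objective value. Run every task at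
  the common speed \<open>\<sigma> = v\<^sub>m\<^sub>a\<^sub>x / D\<close>, where \<open>D = (|T| v\<^sub>m\<^sub>a\<^sub>x\<^sup>\<beta> / E)\<^bsup>1/(\<beta>-1)\<^esup>\<close> is chosen so that
  the energy bound \<open>|T| v\<^sub>m\<^sub>a\<^sub>x \<sigma>\<^bsup>\<beta>-1\<^esup> \<le> E\<close> holds with equality; then every task takes at most
  \<open>D\<close>. After \<open>r\<^sub>m\<^sub>a\<^sub>x\<close>, give job \<open>j\<close> the Map slot \<open>[r\<^sub>m\<^sub>a\<^sub>x + (2j-2)D, r\<^sub>m\<^sub>a\<^sub>x + (2j-1)D]\<close> and the
  Reduce slot right after it. Job \<open>j\<close> completes by \<open>r\<^sub>m\<^sub>a\<^sub>x + 2jD\<close>, so the objective is at most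
  \<open>w\<^sub>m\<^sub>a\<^sub>x (n r\<^sub>m\<^sub>a\<^sub>x + n(n+1)D)\<close>. An optimal schedule does no worse, and its objective is at
  least \<open>w\<^sub>m\<^sub>i\<^sub>n\<close> times its makespan.\<close>

lemma finite_tasks: "finite (tasks n m kind)"
  by (rule finite_subset[of _ "{1..m} \<times> {1..n}"]) (auto simp: tasks_def)

lemma compl_le_job_completion:
  assumes "i \<in> {1..m}" "kind i j \<noteq> None"
  shows "compl v S s i j \<le> job_completion m kind v S s j"
  unfolding job_completion_def by (rule Max_ge) (use assms in auto)

lemma job_completion_le:
  assumes "i \<in> {1..m}" "kind i j \<noteq> None"
    and "\<And>i. i \<in> {1..m} \<Longrightarrow> kind i j \<noteq> None \<Longrightarrow> compl v S s i j \<le> t"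
  shows "job_completion m kind v S s j \<le> t"
  unfolding job_completion_def by (subst Max_le_iff) (use assms in auto)

lemma job_completion_nonneg:
  assumes "valid_instance n m kind w r v \<beta> E" "feasible n m kind r v \<beta> E S s" "j \<in> {1..n}"
  shows "job_completion m kind v S s j \<ge> 0"
proof -
  obtain i where i: "i \<in> {1..m}" "kind i j = Some MapTask"
    using assms(1,3) unfolding valid_instance_def by blast
  then have task: "(i, j) \<in> tasks n m kind" using assms(3) by (simp add: tasks_def)
  have "0 < s i j" "r j \<le> S i j" using assms(2) task by (auto simp: feasible_def)
  moreover have "0 \<le> r j" "0 \<le> v i j" using assms(1,3) task by (auto simp: valid_instance_def)
  ultimately have "0 \<le> compl v S s i j" by (simp add: compl_def)
  also have "\<dots> \<le> job_completion m kind v S s j"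
    using i by (intro compl_le_job_completion) auto
  finally show ?thesis .
qed

lemma Min_mult_Max_le_sum:
  fixes w C :: "'a \<Rightarrow> real"
  assumes "finite A" "A \<noteq> {}" "\<And>j. j \<in> A \<Longrightarrow> w j > 0" "\<And>j. j \<in> A \<Longrightarrow> C j \<ge> 0"
  shows "Min (w ` A) * Max (C ` A) \<le> (\<Sum>j\<in>A. w j * C j)"
proof -
  obtain k where k: "k \<in> A" "Max (C ` A) = C k"
  proof -
    have "Max (C ` A) \<in> C ` A" using assms(1,2) by (intro Max_in) auto
    then show ?thesis using that by auto
  qed
  have "Min (w ` A) * C k \<le> w k * C k"
    using k(1) assms(1,4) by (intro mult_right_mono) auto
  also have "\<dots> \<le> (\<Sum>j\<in>A. w j * C j)"
    using k(1) assms by (intro member_le_sum) (auto intro: mult_nonneg_nonneg less_imp_le)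
  finally show ?thesis using k(2) by simp
qed

definition layered_start :: "(nat \<Rightarrow> nat \<Rightarrow> phase option) \<Rightarrow> real \<Rightarrow> real \<Rightarrow> nat \<Rightarrow> nat \<Rightarrow> real"
  where "layered_start kind \<rho> D i j =
    \<rho> + (2 * real j - (if kind i j = Some MapTask then 2 else 1)) * D"

lemma layered_start_ge: "D \<ge> 0 \<Longrightarrow> layered_start kind \<rho> D i j \<ge> \<rho> + (2 * real j - 2) * D"
  by (simp add: layered_start_def mult_right_mono)

lemma layered_compl_le:
  assumes "D \<ge> 0" "v i j / \<sigma> \<le> D"
  shows "compl v (layered_start kind \<rho> D) (\<lambda>_ _. \<sigma>) i j \<le> \<rho> + 2 * real j * D"
  using assms by (simp add: compl_def layered_start_def algebra_simps)

lemma layered_feasible: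
  assumes "\<And>j. j \<in> {1..n} \<Longrightarrow> r j \<le> \<rho>" "D \<ge> 0" "\<sigma> > 0"
    and dur: "\<And>i j. (i, j) \<in> tasks n m kind \<Longrightarrow> v i j / \<sigma> \<le> D"
    and "energy n m kind v \<beta> (\<lambda>_ _. \<sigma>) \<le> E"
  shows "feasible n m kind r v \<beta> E (layered_start kind \<rho> D) (\<lambda>_ _. \<sigma>)"
proof -
  let ?S = "layered_start kind \<rho> D" and ?s = "\<lambda>_ _. \<sigma>"
  have release: "r j \<le> ?S i j" if "(i, j) \<in> tasks n m kind" for i j
  proof -
    have j: "j \<in> {1..n}" using that by (simp add: tasks_def)
    then have "0 \<le> (2 * real j - 2) * D" using assms(2) by simp
    then have "r j \<le> \<rho> + (2 * real j - 2) * D" using assms(1)[OF j] by linarith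
    then show ?thesis using layered_start_ge[OF assms(2)] by (meson order_trans)
  qed
  have earlier_first: "compl v ?S ?s i j \<le> ?S i j'"
    if "(i, j) \<in> tasks n m kind" "j < j'" for i j j'
  proof -
    have "\<rho> + 2 * real j * D \<le> \<rho> + (2 * real j' - 2) * D"
      using that(2) assms(2) by (intro add_left_mono mult_right_mono) auto
    then show ?thesis
      using layered_compl_le[where v = v and kind = kind and \<rho> = \<rho>, OF assms(2) dur[OF that(1)]]
        layered_start_ge[OF assms(2)]
      by (meson order_trans)
  qed
  have map_before_reduce: "compl v ?S ?s i j \<le> ?S i' j"
    if "(i, j) \<in> tasks n m kind" "kind i j = Some MapTask" "kind i' j = Some ReduceTask" for i i' j
    using that dur[OF that(1)] by (simp add: compl_def layered_start_def algebra_simps)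
  show ?thesis
    unfolding feasible_def
  proof (intro conjI)
    show "\<forall>i j j'. (i, j) \<in> tasks n m kind \<and> (i, j') \<in> tasks n m kind \<and> j \<noteq> j' \<longrightarrow>
        compl v ?S ?s i j \<le> ?S i j' \<or> compl v ?S ?s i j' \<le> ?S i j"
      using earlier_first by (metis linorder_neqE_nat)
    show "\<forall>j\<in>{1..n}. \<forall>i\<in>{1..m}. \<forall>i'\<in>{1..m}. kind i j = Some MapTask \<and>
        kind i' j = Some ReduceTask \<longrightarrow> compl v ?S ?s i j \<le> ?S i' j"
      using map_before_reduce by (auto simp: tasks_def)
  qed (use assms(3,5) release in auto)
qed

lemma layered_objective_le:
  assumes "valid_instance n m kind w r v \<beta> E" "\<rho> \<ge> 0" "D \<ge> 0"
    and dur: "\<And>i j. (i, j) \<in> tasks n m kind \<Longrightarrow> v i j / \<sigma> \<le> D"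
  shows "objective n m kind w v (layered_start kind \<rho> D) (\<lambda>_ _. \<sigma>)
    \<le> Max (w ` {1..n}) * (real n * \<rho> + real n * (real n + 1) * D)"
proof -
  let ?C = "job_completion m kind v (layered_start kind \<rho> D) (\<lambda>_ _. \<sigma>)"
  have "w j * ?C j \<le> Max (w ` {1..n}) * (\<rho> + 2 * real j * D)" if j: "j \<in> {1..n}" for j
  proof -
    obtain i where "i \<in> {1..m}" "kind i j = Some MapTask"
      using assms(1) j unfolding valid_instance_def by blast
    have "?C j \<le> \<rho> + 2 * real j * D"
    proof (rule job_completion_le)
      fix i assume "i \<in> {1..m}" "kind i j \<noteq> None"
      then have "(i, j) \<in> tasks n m kind" using j by (simp add: tasks_def)
      then show "compl v (layered_start kind \<rho> D) (\<lambda>_ _. \<sigma>) i j \<le> \<rho> + 2 * real j * D"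
        using layered_compl_le[where v = v, OF assms(3) dur] by blast
    qed (use \<open>i \<in> {1..m}\<close> \<open>kind i j = Some MapTask\<close> in auto)
    moreover have "w j > 0" using assms(1) j unfolding valid_instance_def by blast
    ultimately have "w j * ?C j \<le> w j * (\<rho> + 2 * real j * D)"
      by (intro mult_left_mono) auto
    also have "\<dots> \<le> Max (w ` {1..n}) * (\<rho> + 2 * real j * D)"
      using j assms(2,3) by (intro mult_right_mono) auto
    finally show ?thesis .
  qed
  then have "objective n m kind w v (layered_start kind \<rho> D) (\<lambda>_ _. \<sigma>)
      \<le> Max (w ` {1..n}) * (\<Sum>j\<in>{1..n}. \<rho> + 2 * real j * D)"
    unfolding objective_def sum_distrib_left by (rule sum_mono)
  also have "(\<Sum>j\<in>{1..n}. \<rho> + 2 * real j * D) = real n * \<rho> + real n * (real n + 1) * D"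
    using double_gauss_sum_from_Suc_0[of n, where 'a = real]
    by (simp add: sum.distrib sum_distrib_right[symmetric] mult.assoc mult.left_commute)
  finally show ?thesis .
qed

lemma uniform_speed:
  assumes "valid_instance n m kind w r v \<beta> E"
  defines "D \<equiv> (real (card (tasks n m kind)) * Max ((\<lambda>(i, j). v i j) ` tasks n m kind) powr \<beta>
      / E) powr (1 / (\<beta> - 1))"
  obtains \<sigma> where "\<sigma> > 0" "\<And>i j. (i, j) \<in> tasks n m kind \<Longrightarrow> v i j / \<sigma> \<le> D"
    "energy n m kind v \<beta> (\<lambda>_ _. \<sigma>) \<le> E"
proof -
  let ?T = "tasks n m kind"
  define vmax where "vmax = Max ((\<lambda>(i, j). v i j) ` ?T)"
  have \<beta>: "\<beta> > 1" and E: "E > 0" and v_nonneg: "\<And>i j. (i, j) \<in> ?T \<Longrightarrow> v i j \<ge> 0"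
    using assms(1) by (auto simp: valid_instance_def)
  have v_le: "v i j \<le> vmax" if "(i, j) \<in> ?T" for i j
    unfolding vmax_def by (rule Max_ge) (use that finite_tasks in auto)
  have energy_le: "energy n m kind v \<beta> (\<lambda>_ _. \<sigma>) \<le> real (card ?T) * vmax * \<sigma> powr (\<beta> - 1)" for \<sigma>
  proof -
    have "energy n m kind v \<beta> (\<lambda>_ _. \<sigma>) \<le> (\<Sum>(i, j)\<in>?T. vmax * \<sigma> powr (\<beta> - 1))"
      unfolding energy_def by (rule sum_mono) (auto intro: mult_right_mono v_le)
    then show ?thesis by simp
  qed
  show ?thesis
  proof (cases "vmax = 0")
    case True
    have "D \<ge> 0" by (simp add: D_def)
    then show ?thesis
      using that[of 1] energy_le[of 1] v_le v_nonneg E True by force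
  next
    case False
    obtain i0 j0 where "(i0, j0) \<in> ?T"
      using assms(1) by (fastforce simp: valid_instance_def tasks_def)
    then have "vmax > 0" "card ?T > 0"
      using False v_le v_nonneg finite_tasks card_gt_0_iff by (fastforce, blast)
    define X where "X = real (card ?T) * vmax powr \<beta> / E"
    have X: "X > 0" using \<open>vmax > 0\<close> \<open>card ?T > 0\<close> E by (simp add: X_def)
    have "D = X powr (1 / (\<beta> - 1))" by (simp add: D_def X_def vmax_def)
    then have D: "D > 0" "D powr (\<beta> - 1) = X"
      using X \<beta> by (simp_all add: powr_powr)
    have "(vmax / D) powr (\<beta> - 1) = vmax powr (\<beta> - 1) / X"
      using \<open>vmax > 0\<close> D by (simp add: powr_divide)
    also have "vmax powr (\<beta> - 1) = vmax powr \<beta> / vmax"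
      using \<open>vmax > 0\<close> by (simp add: powr_diff)
    finally have speed_power: "(vmax / D) powr (\<beta> - 1) = vmax powr \<beta> / (vmax * X)"
      by simp
    have "real (card ?T) * vmax * (vmax / D) powr (\<beta> - 1) = E"
      unfolding speed_power using \<open>vmax > 0\<close> \<open>card ?T > 0\<close> X E by (simp add: X_def field_simps)
    moreover have "v i j / (vmax / D) \<le> D" if "(i, j) \<in> ?T" for i j
      using v_le[OF that] \<open>vmax > 0\<close> D(1) by (simp add: field_simps mult_right_mono)
    ultimately show ?thesis
      using that[of "vmax / D"] energy_le[of "vmax / D"] \<open>vmax > 0\<close> D(1) by force
  qed
qed

theorem proposition1:
  fixes n m :: nat and kind :: "nat \<Rightarrow> nat \<Rightarrow> phase option"
    and w r :: "nat \<Rightarrow> real" and v :: "nat \<Rightarrow> nat \<Rightarrow> real" and \<beta> E :: real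
    and S s :: "nat \<Rightarrow> nat \<Rightarrow> real"
  assumes "valid_instance n m kind w r v \<beta> E"
    and "optimal n m kind w r v \<beta> E S s"
  shows "Max (job_completion m kind v S s ` {1..n})
    \<le> (Max (w ` {1..n}) / Min (w ` {1..n})) *
       (real n * Max (r ` {1..n})
        + real n * (real n + 1) *
          ((real (card (tasks n m kind)) * (Max ((\<lambda>(i, j). v i j) ` tasks n m kind)) powr \<beta>) / E)
            powr (1 / (\<beta> - 1)))"
proof -
  define D where "D = ((real (card (tasks n m kind)) * (Max ((\<lambda>(i, j). v i j) ` tasks n m kind))
      powr \<beta>) / E) powr (1 / (\<beta> - 1))"
  define \<rho> where "\<rho> = Max (r ` {1..n})"
  have n: "n \<ge> 1" and w: "\<And>j. j \<in> {1..n} \<Longrightarrow> w j > 0" and "r 1 \<ge> 0"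
    using assms(1) by (auto simp: valid_instance_def)
  then have \<rho>: "\<rho> \<ge> 0" "\<And>j. j \<in> {1..n} \<Longrightarrow> r j \<le> \<rho>"
    unfolding \<rho>_def by (auto intro: order_trans[OF _ Max_ge])
  obtain \<sigma> where \<sigma>: "\<sigma> > 0" "\<And>i j. (i, j) \<in> tasks n m kind \<Longrightarrow> v i j / \<sigma> \<le> D"
    "energy n m kind v \<beta> (\<lambda>_ _. \<sigma>) \<le> E"
    using uniform_speed[OF assms(1)] unfolding D_def by blast
  have "D \<ge> 0" by (simp add: D_def)
  have "Min (w ` {1..n}) * Max (job_completion m kind v S s ` {1..n}) \<le> objective n m kind w v S s"
    unfolding objective_def using n w job_completion_nonneg assms optimal_def
    by (intro Min_mult_Max_le_sum) auto
  also have "\<dots> \<le> objective n m kind w v (layered_start kind \<rho> D) (\<lambda>_ _. \<sigma>)"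
    using assms(2) layered_feasible[OF \<rho>(2) \<open>D \<ge> 0\<close> \<sigma>] by (simp add: optimal_def)
  also have "\<dots> \<le> Max (w ` {1..n}) * (real n * \<rho> + real n * (real n + 1) * D)"
    by (rule layered_objective_le[OF assms(1) \<rho>(1) \<open>D \<ge> 0\<close> \<sigma>(2)])
  finally show ?thesis
    using Min_in[of "w ` {1..n}"] n w by (auto simp: \<rho>_def D_def field_simps)
qed

end
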